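(* For every instance such that $|S_2|=2$ and $\pi_1+\pi_3+\pi_4-1=0$, we have $H^{PW''}\le \tfrac{100}{53}H^*$.
   Context: An instance consists of an integer $n\ge 1$ and growth rates $1=h(1)\ge h(2)\ge\cdots\ge h(n)>0$ of bamboos $b_1,\dots,b_n$. Bamboo Garden Trimming (discrete version): - All heights are $0$ initially. - On each day $t=1,2,\dots$ every bamboo $b_j$ grows by $h(j)$. - At the end of each day the gardener cuts exactly one bamboo $\sigma(t)\in\{1,\dots,n\}$ back to height $0$. The height of a schedule $\sigma:\mathbb{N}\to\{1,\dots,n\}$ is the supremum, over all days $t$ and all $j$, of the height of $b_j$ at the end of day $t$ just before the cut. $H^*$ denotes the infimum of this height over all schedules. Value of algorithm PW'': - Split $\{1,\dots,n\}$ into four sets: - $S_1=\{j: \tfrac23<h(j)\le 1\}$; - $S_2=\{j:\tfrac12<h(j)\le\tfrac23\}$; - $S_3=\{j: h(j)\le\tfrac12 \text{ and } \tfrac23 2^{-k}<h(j)\le 2^{-k}\text{ for some integer }k\ge1\}$; - $S_4=\{j: h(j)\le\tfrac12\text{ and } 2^{-(k+1)}<h(j)\le \tfrac23 2^{-k}\text{ for some integer }k\ge 1\}$. - Modified growths: $h''(j)=2^{-k}$ for $j\in S_3$ and $h''(j)=\tfrac23 2^{-k}$ for $j\in S_4$, with $k$ as in the definition of the set. - Let $\pi_1=|S_1|$, $sh_3=\sum_{j\in S_3}h''(j)$, $sh_4=\sum_{j\in S_4}h''(j)$, $\pi_3=\lfloor sh_3\rfloor$, $\pi_4=\lfloor sh_4\rfloor$,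 $f_3=sh_3-\pi_3$, $f_4=sh_4-\pi_4$. - Option (a): $\pi_R(a)=\lceil f_3+f_4\rceil$ and $z(a)=\pi_1+|S_2|+\pi_3+\pi_4+\pi_R(a)$. - Option (b): if $S_2=\emptyset$ put $z(b)=+\infty$. Otherwise let $h^*=\max_{j\in S_2}h(j)$ and $f_2=\tfrac12$ if $|S_2|$ is odd, $f_2=0$ if $|S_2|$ is even. Then $\pi_R(b)=\lceil f_2+f_3+f_4\rceil$ and $z(b)=2h^*\,(\pi_1+\lfloor |S_2|/2\rfloor+\pi_3+\pi_4+\pi_R(b))$. - The value returned by algorithm PW'' is $H^{PW''}=\min\{z(a),z(b)\}$. The paper takes this as the maximum height of the periodic pinwheel trimming schedule that it builds from these partitions. *)

theory Defs
  imports Complex_Main "HOL-Library.Extended_Real"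
begin

text \<open>Bamboos are indexed by 1..n; h j is the growth rate of bamboo j.\<close>

definition bgt_instance :: "nat \<Rightarrow> (nat \<Rightarrow> real) \<Rightarrow> bool" where
  "bgt_instance n h \<longleftrightarrow> n \<ge> 1 \<and> h 1 = 1 \<and>
     (\<forall>i j. 1 \<le> i \<longrightarrow> i \<le> j \<longrightarrow> j \<le> n \<longrightarrow> h j \<le> h i) \<and> h n > 0"

text \<open>A schedule cuts bamboo sigma t at the end of day t (t = 1, 2, ...).\<close>

definition schedules :: "nat \<Rightarrow> (nat \<Rightarrow> nat) set" where
  "schedules n = {\<sigma>. \<forall>t\<ge>1. \<sigma> t \<in> {1..n}}"

definition last_cut :: "(nat \<Rightarrow> nat) \<Rightarrow> nat \<Rightarrow> nat \<Rightarrow> nat" where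
  "last_cut \<sigma> j t = Max (insert 0 {s. 1 \<le> s \<and> s < t \<and> \<sigma> s = j})"

text \<open>Height of bamboo j at the end of day t, just before the cut.\<close>

definition height_before_cut :: "(nat \<Rightarrow> real) \<Rightarrow> (nat \<Rightarrow> nat) \<Rightarrow> nat \<Rightarrow> nat \<Rightarrow> real" where
  "height_before_cut h \<sigma> j t = h j * real (t - last_cut \<sigma> j t)"

definition sched_height :: "nat \<Rightarrow> (nat \<Rightarrow> real) \<Rightarrow> (nat \<Rightarrow> nat) \<Rightarrow> ereal" where
  "sched_height n h \<sigma> = (SUP t\<in>{1..}. SUP j\<in>{1..n}. ereal (height_before_cut h \<sigma> j t))"

definition Hstar :: "nat \<Rightarrow> (nat \<Rightarrow> real) \<Rightarrow> ereal" where
  "Hstar n h = (INF \<sigma>\<in>schedules n. sched_height n h \<sigma>)"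

definition S1 :: "nat \<Rightarrow> (nat \<Rightarrow> real) \<Rightarrow> nat set" where
  "S1 n h = {j\<in>{1..n}. 2/3 < h j \<and> h j \<le> 1}"

definition S2 :: "nat \<Rightarrow> (nat \<Rightarrow> real) \<Rightarrow> nat set" where
  "S2 n h = {j\<in>{1..n}. 1/2 < h j \<and> h j \<le> 2/3}"

definition S3 :: "nat \<Rightarrow> (nat \<Rightarrow> real) \<Rightarrow> nat set" where
  "S3 n h = {j\<in>{1..n}. h j \<le> 1/2 \<and>
     (\<exists>k::nat. k \<ge> 1 \<and> 2/3 * (1/2)^k < h j \<and> h j \<le> (1/2)^k)}"

definition S4 :: "nat \<Rightarrow> (nat \<Rightarrow> real) \<Rightarrow> nat set" where
  "S4 n h = {j\<in>{1..n}. h j \<le> 1/2 \<and>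
     (\<exists>k::nat. k \<ge> 1 \<and> (1/2)^(k+1) < h j \<and> h j \<le> 2/3 * (1/2)^k)}"

text \<open>Modified growth rates; k is the (unique) integer from the set definitions.\<close>

definition h3'' :: "real \<Rightarrow> real" where
  "h3'' x = (1/2) ^ (THE k::nat. k \<ge> 1 \<and> 2/3 * (1/2)^k < x \<and> x \<le> (1/2)^k)"

definition h4'' :: "real \<Rightarrow> real" where
  "h4'' x = 2/3 * (1/2) ^ (THE k::nat. k \<ge> 1 \<and> (1/2)^(k+1) < x \<and> x \<le> 2/3 * (1/2)^k)"

definition sh3 :: "nat \<Rightarrow> (nat \<Rightarrow> real) \<Rightarrow> real" where
  "sh3 n h = (\<Sum>j\<in>S3 n h. h3'' (h j))"

definition sh4 :: "nat \<Rightarrow> (nat \<Rightarrow> real) \<Rightarrow> real" where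
  "sh4 n h = (\<Sum>j\<in>S4 n h. h4'' (h j))"

definition pi1 :: "nat \<Rightarrow> (nat \<Rightarrow> real) \<Rightarrow> int" where
  "pi1 n h = int (card (S1 n h))"

definition pi3 :: "nat \<Rightarrow> (nat \<Rightarrow> real) \<Rightarrow> int" where
  "pi3 n h = \<lfloor>sh3 n h\<rfloor>"

definition pi4 :: "nat \<Rightarrow> (nat \<Rightarrow> real) \<Rightarrow> int" where
  "pi4 n h = \<lfloor>sh4 n h\<rfloor>"

definition f3 :: "nat \<Rightarrow> (nat \<Rightarrow> real) \<Rightarrow> real" where
  "f3 n h = sh3 n h - of_int (pi3 n h)"

definition f4 :: "nat \<Rightarrow> (nat \<Rightarrow> real) \<Rightarrow> real" where
  "f4 n h = sh4 n h - of_int (pi4 n h)"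

definition z_a :: "nat \<Rightarrow> (nat \<Rightarrow> real) \<Rightarrow> real" where
  "z_a n h = of_int (pi1 n h + int (card (S2 n h)) + pi3 n h + pi4 n h
                     + \<lceil>f3 n h + f4 n h\<rceil>)"

definition z_b :: "nat \<Rightarrow> (nat \<Rightarrow> real) \<Rightarrow> ereal" where
  "z_b n h =
    (if S2 n h = {} then \<infinity>
     else (let hs = Max (h ` S2 n h);
               f2 = (if odd (card (S2 n h)) then 1/2 else 0 :: real)
           in ereal (2 * hs * of_int (pi1 n h + int (card (S2 n h) div 2) + pi3 n h + pi4 n h
                                       + \<lceil>f2 + f3 n h + f4 n h\<rceil>))))"

definition H_PW :: "nat \<Rightarrow> (nat \<Rightarrow> real) \<Rightarrow> ereal" where
  "H_PW n h = min (ereal (z_a n h)) (z_b n h)"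

end

theory Submission imports Defs begin

text \<open>
  Every schedule has height at least the total growth rate \<open>\<Sum>h\<close>: a schedule of height
  \<open>H\<close> must cut bamboo \<open>j\<close> at least about \<open>W h(j) / H\<close> times among the first \<open>W\<close> days, and
  only \<open>W\<close> cuts are available. Under the hypotheses, \<open>S\<^sub>1\<close> contains only bamboo 1 and
  \<open>s = sh\<^sub>3 + sh\<^sub>4 < 2\<close>, so option (b) yields \<open>2h\<^sup>*(2 + \<lceil>s\<rceil>)\<close>, while
  \<open>\<Sum>h \<ge> 1 + h(j\<^sub>1) + h(j\<^sub>2) + 2s/3\<close> because the modified rates exceed the true ones by a
  factor at most \<open>3/2\<close>. A case distinction on \<open>\<lceil>s\<rceil>\<close> compares the two quantities.
\<close>

lemma height_before_cut_first_day: "height_before_cut h \<sigma> j 1 = h j"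
proof -
  have "{s. 1 \<le> s \<and> s < (1::nat) \<and> \<sigma> s = j} = {}" by auto
  then show ?thesis unfolding height_before_cut_def last_cut_def by (simp only:) simp
qed

lemma cut_in_every_window:
  assumes bound: "\<forall>t\<ge>1. \<forall>j\<in>{1..n}. height_before_cut h \<sigma> j t \<le> H"
    and j: "j \<in> {1..n}" and hj: "0 < h j" and window: "H < h j * real (d + 1)"
  shows "\<exists>s\<in>{a+1..a+d}. \<sigma> s = j"
proof (rule ccontr)
  assume no_cut: "\<not> ?thesis"
  let ?t = "a + d + 1"
  have "finite {s. 1 \<le> s \<and> s < ?t \<and> \<sigma> s = j}"
    by (rule finite_subset[of _ "{..<?t}"]) auto
  moreover have "\<forall>s\<in>{s. 1 \<le> s \<and> s < ?t \<and> \<sigma> s = j}. s \<le> a"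
    using no_cut by (auto simp: not_le)
  ultimately have "last_cut \<sigma> j ?t \<le> a"
    unfolding last_cut_def by (subst Max_le_iff) auto
  then have "h j * real (d + 1) \<le> height_before_cut h \<sigma> j ?t"
    unfolding height_before_cut_def using hj by (intro mult_left_mono) auto
  moreover have "height_before_cut h \<sigma> j ?t \<le> H" using bound j by auto
  ultimately show False using window by linarith
qed

lemma card_le_if_meets_every_window:
  assumes "\<forall>a. \<exists>s\<in>{a+1..a+d}. s \<in> A"
  shows "W div d \<le> card (A \<inter> {1..W})"
proof -
  have "q \<le> card (A \<inter> {1..q*d})" for q
  proof (induction q)
    case 0 then show ?case by simp
  next
    case (Suc q)
    obtain s where s: "s \<in> {q*d+1..q*d+d}" "s \<in> A" using assms by blast
    then have "insert s (A \<inter> {1..q*d}) \<subseteq> A \<inter> {1..Suc q * d}" and "s \<notin> A \<inter> {1..q*d}"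
      by auto
    then have "Suc (card (A \<inter> {1..q*d})) \<le> card (A \<inter> {1..Suc q * d})"
      by (metis card_insert_disjoint card_mono finite_Int finite_atLeastAtMost)
    with Suc.IH show ?case by simp
  qed
  also have "card (A \<inter> {1..(W div d) * d}) \<le> card (A \<inter> {1..W})"
    by (intro card_mono) (auto intro: order_trans[OF _ div_times_less_eq_dividend])
  finally show ?thesis .
qed

lemma card_cuts_lower_bound:
  assumes bound: "\<forall>t\<ge>1. \<forall>j\<in>{1..n}. height_before_cut h \<sigma> j t \<le> H"
    and j: "j \<in> {1..n}" and hj: "0 < h j"
  shows "real W * h j / H - 1 \<le> real (card {s\<in>{1..W}. \<sigma> s = j})"
proof -
  have "h j \<le> H" using bound j height_before_cut_first_day[of h \<sigma> j] by fastforce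
  then have ratio: "1 \<le> H / h j" using hj by simp
  define d where "d = nat \<lfloor>H / h j\<rfloor>"
  have d: "1 \<le> d" "real d \<le> H / h j" and "H / h j < real (d + 1)"
    unfolding d_def using ratio by linarith+
  then have "H < h j * real (d + 1)" using hj by (simp add: field_simps)
  then have "\<forall>a. \<exists>s\<in>{a+1..a+d}. s \<in> {s. \<sigma> s = j}"
    using cut_in_every_window[OF bound j hj] by simp
  then have "W div d \<le> card {s\<in>{1..W}. \<sigma> s = j}"
    using card_le_if_meets_every_window[of d "{s. \<sigma> s = j}" W]
    by (simp add: Int_def conj_commute)
  moreover have "real W * h j / H = real W / (H / h j)" using hj by simp
  moreover have "real W / (H / h j) \<le> real W / real d"
    using d ratio by (intro divide_left_mono mult_pos_pos) auto
  moreover have "real W / real d - 1 < real (W div d)"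
    using real_of_int_floor_gt_diff_one[of "real W / real d"]
    by (simp only: floor_divide_of_nat_eq of_int_of_nat_eq)
  ultimately show ?thesis by linarith
qed

lemma sum_growth_le_height_bound:
  assumes bound: "\<forall>t\<ge>1. \<forall>j\<in>{1..n}. height_before_cut h \<sigma> j t \<le> H"
    and pos: "\<forall>j\<in>{1..n}. 0 < h j" and n: "1 \<le> n"
  shows "(\<Sum>j\<in>{1..n}. h j) \<le> H"
proof (rule ccontr)
  define S where "S = (\<Sum>j\<in>{1..n}. h j)"
  assume "\<not> (\<Sum>j\<in>{1..n}. h j) \<le> H"
  then have "H < S" unfolding S_def by simp
  have "h 1 \<le> H" using bound n height_before_cut_first_day[of h \<sigma> 1] by force
  moreover have "0 < h 1" using pos n by simp
  ultimately have "0 < H" by linarith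
  obtain W :: nat where W: "real n * H / (S - H) < real W" using reals_Archimedean2 by blast
  have "(\<Sum>j\<in>{1..n}. card {s\<in>{1..W}. \<sigma> s = j}) = card (\<Union>j\<in>{1..n}. {s\<in>{1..W}. \<sigma> s = j})"
    by (rule card_UN_disjoint[symmetric]) auto
  also have "\<dots> \<le> card {1..W}" by (rule card_mono) auto
  finally have "(\<Sum>j\<in>{1..n}. real (card {s\<in>{1..W}. \<sigma> s = j})) \<le> real W"
    by (metis card_atLeastAtMost diff_Suc_1 of_nat_le_iff of_nat_sum)
  moreover have "(\<Sum>j\<in>{1..n}. real W * h j / H - 1) \<le> (\<Sum>j\<in>{1..n}. real (card {s\<in>{1..W}. \<sigma> s = j}))"
    using card_cuts_lower_bound[OF bound] pos by (intro sum_mono) auto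
  moreover have "(\<Sum>j\<in>{1..n}. real W * h j / H - 1) = real W * S / H - real n"
    unfolding S_def by (simp add: sum_subtractf sum_divide_distrib[symmetric] sum_distrib_left)
  ultimately have "real W * S / H - real n \<le> real W" by linarith
  then have "real W * S - real n * H \<le> real W * H" using \<open>0 < H\<close> by (simp add: field_simps)
  moreover have "real n * H < real W * (S - H)" using W \<open>H < S\<close> by (simp add: field_simps)
  ultimately show False by (simp add: algebra_simps)
qed

lemma sum_growth_le_sched_height:
  assumes pos: "\<forall>j\<in>{1..n}. 0 < h j" and n: "1 \<le> n"
  shows "ereal (\<Sum>j\<in>{1..n}. h j) \<le> sched_height n h \<sigma>"
proof (rule ccontr)
  assume "\<not> ?thesis"
  then have "sched_height n h \<sigma> < ereal (\<Sum>j\<in>{1..n}. h j)" by simp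
  then obtain r where r: "sched_height n h \<sigma> < ereal r" "ereal r < ereal (\<Sum>j\<in>{1..n}. h j)"
    using ereal_dense2 by blast
  have "height_before_cut h \<sigma> j t \<le> r" if "1 \<le> t" "j \<in> {1..n}" for t j
  proof -
    have "ereal (height_before_cut h \<sigma> j t) \<le> (SUP j\<in>{1..n}. ereal (height_before_cut h \<sigma> j t))"
      using that(2) by (rule SUP_upper)
    also have "\<dots> \<le> sched_height n h \<sigma>"
      unfolding sched_height_def using that(1) by (intro SUP_upper) auto
    finally have "ereal (height_before_cut h \<sigma> j t) < ereal r" using r(1) by (rule le_less_trans)
    then show ?thesis by simp
  qed
  with sum_growth_le_height_bound[OF _ pos n] r(2) show False by fastforce
qed

lemma sum_growth_le_Hstar:
  assumes "\<forall>j\<in>{1..n}. 0 < h j" and "1 \<le> n"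
  shows "ereal (\<Sum>j\<in>{1..n}. h j) \<le> Hstar n h"
  unfolding Hstar_def using sum_growth_le_sched_height[OF assms] by (rule INF_greatest)

lemma half_power_le_half_of_less: "k < k' \<Longrightarrow> (1/2::real)^k' \<le> (1/2)^k / 2"
  using power_decreasing[of "Suc k" k' "1/2::real"] by simp

lemma h3''_eq:
  assumes "1 \<le> k" "2/3 * (1/2)^k < x" "x \<le> (1/2::real)^k"
  shows "h3'' x = (1/2)^k"
proof -
  have "(THE k::nat. 1 \<le> k \<and> 2/3 * (1/2)^k < x \<and> x \<le> (1/2)^k) = k"
  proof (rule the_equality)
    fix k' assume k': "1 \<le> k' \<and> 2/3 * (1/2)^k' < x \<and> x \<le> (1/2::real)^k'"
    show "k' = k"
      using half_power_le_half_of_less[of k k'] half_power_le_half_of_less[of k' k] k' assms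
      by (cases k k' rule: linorder_cases) auto
  qed (use assms in auto)
  then show ?thesis unfolding h3''_def by simp
qed

lemma h4''_eq:
  assumes "1 \<le> k" "(1/2)^(k+1) < x" "x \<le> 2/3 * (1/2::real)^k"
  shows "h4'' x = 2/3 * (1/2)^k"
proof -
  have "(THE k::nat. 1 \<le> k \<and> (1/2)^(k+1) < x \<and> x \<le> 2/3 * (1/2)^k) = k"
  proof (rule the_equality)
    fix k' assume k': "1 \<le> k' \<and> (1/2)^(k'+1) < x \<and> x \<le> 2/3 * (1/2::real)^k'"
    show "k' = k"
      using half_power_le_half_of_less[of k k'] half_power_le_half_of_less[of k' k] k' assms
      by (cases k k' rule: linorder_cases) auto
  qed (use assms in auto)
  then show ?thesis unfolding h4''_def by simp
qed

lemma S3_modified_rate_bounds: "j \<in> S3 n h \<Longrightarrow> 0 \<le> h3'' (h j) \<and> 2/3 * h3'' (h j) \<le> h j"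
  unfolding S3_def using h3''_eq by fastforce

lemma S4_modified_rate_bounds: "j \<in> S4 n h \<Longrightarrow> 0 \<le> h4'' (h j) \<and> 2/3 * h4'' (h j) \<le> h j"
  unfolding S4_def using h4''_eq by fastforce

lemma sh3_nonneg: "0 \<le> sh3 n h"
  unfolding sh3_def using S3_modified_rate_bounds by (intro sum_nonneg) auto

lemma sh4_nonneg: "0 \<le> sh4 n h"
  unfolding sh4_def using S4_modified_rate_bounds by (intro sum_nonneg) auto

lemma S3_S4_disjoint: "S3 n h \<inter> S4 n h = {}"
proof -
  have False if "1 \<le> k" "2/3 * (1/2)^k < x" "x \<le> (1/2::real)^k"
    and "(1/2)^(k'+1) < x" "x \<le> 2/3 * (1/2::real)^k'" for x k k'
  proof (cases "k \<le> k'")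
    case True
    then have "(1/2::real)^k' \<le> (1/2)^k" by (intro power_decreasing) auto
    with that show False by simp
  next
    case False
    then have "(1/2::real)^k \<le> (1/2)^k' / 2" by (intro half_power_le_half_of_less) simp
    with that show False by simp
  qed
  then show ?thesis unfolding S3_def S4_def by blast
qed

lemma bgt_instance_pos: "bgt_instance n h \<Longrightarrow> j \<in> {1..n} \<Longrightarrow> 0 < h j"
  unfolding bgt_instance_def by (meson atLeastAtMost_iff less_le_trans order.refl)

lemma sum_classes_le_sum_growth:
  assumes "bgt_instance n h"
  shows "(\<Sum>j\<in>S1 n h. h j) + (\<Sum>j\<in>S2 n h. h j) + 2/3 * (sh3 n h + sh4 n h) \<le> (\<Sum>j\<in>{1..n}. h j)"
proof -
  have "2/3 * sh3 n h \<le> (\<Sum>j\<in>S3 n h. h j)"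
    unfolding sh3_def sum_distrib_left using S3_modified_rate_bounds by (intro sum_mono) auto
  moreover have "2/3 * sh4 n h \<le> (\<Sum>j\<in>S4 n h. h j)"
    unfolding sh4_def sum_distrib_left using S4_modified_rate_bounds by (intro sum_mono) auto
  moreover have "(\<Sum>j\<in>S1 n h \<union> S2 n h \<union> S3 n h \<union> S4 n h. h j)
      = (\<Sum>j\<in>S1 n h. h j) + (\<Sum>j\<in>S2 n h. h j) + (\<Sum>j\<in>S3 n h. h j) + (\<Sum>j\<in>S4 n h. h j)"
  proof -
    have "h j \<le> 1/2" if "j \<in> S3 n h \<union> S4 n h" for j
      using that unfolding S3_def S4_def by blast
    then have "S1 n h \<inter> S2 n h = {}" "(S1 n h \<union> S2 n h) \<inter> S3 n h = {}"
      "(S1 n h \<union> S2 n h \<union> S3 n h) \<inter> S4 n h = {}"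
      using S3_S4_disjoint[of n h] unfolding S1_def S2_def by fastforce+
    moreover have "finite (S1 n h)" "finite (S2 n h)" "finite (S3 n h)" "finite (S4 n h)"
      unfolding S1_def S2_def S3_def S4_def by auto
    ultimately show ?thesis by (simp add: sum.union_disjoint)
  qed
  moreover have "(\<Sum>j\<in>S1 n h \<union> S2 n h \<union> S3 n h \<union> S4 n h. h j) \<le> (\<Sum>j\<in>{1..n}. h j)"
    using bgt_instance_pos[OF assms]
    by (intro sum_mono2) (auto simp: S1_def S2_def S3_def S4_def less_imp_le)
  ultimately show ?thesis by (simp add: ring_distribs)
qed

lemma S1_eq_if_pi_sum_one:
  assumes "bgt_instance n h" and "pi1 n h + pi3 n h + pi4 n h - 1 = 0"
  shows "S1 n h = {1}" and "pi3 n h = 0" and "pi4 n h = 0"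
proof -
  have "1 \<in> S1 n h" using assms(1) unfolding S1_def bgt_instance_def by auto
  moreover have "finite (S1 n h)" unfolding S1_def by auto
  ultimately have "card (S1 n h) \<noteq> 0" by auto
  then have "1 \<le> pi1 n h" unfolding pi1_def by simp
  moreover have "0 \<le> pi3 n h" "0 \<le> pi4 n h"
    unfolding pi3_def pi4_def using sh3_nonneg sh4_nonneg by auto
  ultimately show "pi3 n h = 0" "pi4 n h = 0"
    using assms(2) unfolding pi1_def by auto
  with \<open>1 \<le> pi1 n h\<close> have "card (S1 n h) = 1" using assms(2) unfolding pi1_def by simp
  with \<open>1 \<in> S1 n h\<close> show "S1 n h = {1}" by (metis card_1_singletonE singletonD)
qed

lemma z_b_eq_if_pi_sum_one:
  assumes "bgt_instance n h" and "pi1 n h + pi3 n h + pi4 n h - 1 = 0"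
    and "S2 n h = {j1, j2}" and "j1 \<noteq> j2"
  shows "z_b n h = ereal (2 * max (h j1) (h j2) * of_int (2 + \<lceil>sh3 n h + sh4 n h\<rceil>))"
  using S1_eq_if_pi_sum_one[OF assms(1,2)] assms(3,4)
  unfolding z_b_def f3_def f4_def pi1_def by (simp add: Let_def)

lemma option_b_ratio_bound:
  fixes x y s :: real
  assumes "1/2 < x" "x \<le> 2/3" "1/2 < y" "y \<le> 2/3" and "0 \<le> s" "s < 2"
  shows "2 * max x y * of_int (2 + \<lceil>s\<rceil>) \<le> 100/53 * (1 + x + y + 2/3 * s)"
proof -
  have "\<lceil>s\<rceil> \<in> {0, 1, 2}" using assms(5,6) by (simp add: ceiling_le_iff) linarith
  moreover have "1 < s" if "\<lceil>s\<rceil> = 2" using that by linarith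
  ultimately show ?thesis using assms by (auto simp: max_def)
qed

theorem proposition6:
  fixes n :: nat and h :: "nat \<Rightarrow> real"
  assumes "bgt_instance n h"
    and "card (S2 n h) = 2"
    and "pi1 n h + pi3 n h + pi4 n h - 1 = 0"
  shows "H_PW n h \<le> ereal (100/53) * Hstar n h"
proof -
  note S1 = S1_eq_if_pi_sum_one[OF assms(1,3)]
  obtain j1 j2 where S2: "S2 n h = {j1, j2}" "j1 \<noteq> j2" using assms(2) by (meson card_2_iff)
  have rates: "1/2 < h j1" "h j1 \<le> 2/3" "1/2 < h j2" "h j2 \<le> 2/3"
    using S2(1) unfolding S2_def by blast+
  define s where "s = sh3 n h + sh4 n h"
  have "sh3 n h < 1" "sh4 n h < 1" using S1(2,3) unfolding pi3_def pi4_def by linarith+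
  then have s: "0 \<le> s" "s < 2" unfolding s_def using sh3_nonneg[of n h] sh4_nonneg[of n h] by linarith+
  have "z_b n h = ereal (2 * max (h j1) (h j2) * of_int (2 + \<lceil>s\<rceil>))"
    using z_b_eq_if_pi_sum_one[OF assms(1,3) S2] unfolding s_def .
  also have "\<dots> \<le> ereal (100/53 * (1 + h j1 + h j2 + 2/3 * s))"
    using option_b_ratio_bound[OF rates s] by simp
  also have "\<dots> \<le> ereal (100/53) * ereal (\<Sum>j\<in>{1..n}. h j)"
  proof -
    have "1 + h j1 + h j2 + 2/3 * s \<le> (\<Sum>j\<in>{1..n}. h j)"
      using sum_classes_le_sum_growth[OF assms(1)] assms(1) S1(1) S2 unfolding s_def
      by (simp add: bgt_instance_def)
    then show ?thesis by simp
  qed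
  also have "\<dots> \<le> ereal (100/53) * Hstar n h"
    using assms(1) bgt_instance_pos[OF assms(1)] sum_growth_le_Hstar
    by (intro ereal_mult_left_mono) (auto simp: bgt_instance_def)
  finally show ?thesis unfolding H_PW_def by (simp add: min.coboundedI2)
qed

end
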